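(* For three players whose utility functions satisfy the nonnegativity, Lipschitz and monotonicity conditions described in the context, an $\epsilon$ envy-free solution (in the discrete sense described in the context) can be found in time $O(\log^2(K/\epsilon))$.
   Context: Three players $0,1,2$ have utility functions $u_i$ on Borel subsets of $[0,1]$ satisfying: (nonnegativity) $u_i(\emptyset)=0$ and $u_i(A)>0$ for nonempty pieces (intervals of positive length); (Lipschitz) $u_i([x,y])\le K|y-x|$ for every interval $[x,y]\subseteq[0,1]$; (monotonicity) $u_i(B)\le u_i(A)$ whenever $B\subseteq A$ (e.g. $u_i$ is a measure). Let $N=\lceil K/\epsilon\rceil$. A 2-cut is an integer vector $(x_0,x_1,x_2)$ with $x_j\ge0$, $x_0+x_1+x_2=N$, cutting $[0,1]$ into pieces $[0,x_0/N]$, $[x_0/N,(x_0+x_1)/N]$, $[(x_0+x_1)/N,1]$, indexed $0,1,2$. For a cut $x$, $P_i(x)$ denotes the index of the piece of $x$ of maximum utility for player $i$; it is assumed (non-degeneracy) that this maximizer is unique. The utilities (equivalently, the choices $P_i$) are accessed via queries. Two cuts $x,y$ are adjacent if $|x_i-y_i|\le 1$ for $i=1,2$. An $\epsilon$ envy-free solution is a set $\{x^{(0)},x^{(1)},x^{(2)}\}$ of pairwise adjacent 2-cuts together with a permutation $\pi$ of $\{0,1,2\}$ such that for every player $i$ there is $j$ with $P_i(x^{(j)})=\pi(i)$. *)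

theory Defs
  imports "HOL-Analysis.Analysis" "HOL-Combinatorics.Permutations"
begin

text \<open>Players are 0,1,2. A utility profile is u :: nat => real set => real,
  u i A being the utility of player i for the (Borel) set A.\<close>

definition valid_utility :: "real \<Rightarrow> (real set \<Rightarrow> real) \<Rightarrow> bool" where
  "valid_utility K v \<longleftrightarrow>
     v {} = 0 \<and>
     (\<forall>x y. 0 \<le> x \<longrightarrow> x < y \<longrightarrow> y \<le> 1 \<longrightarrow> v {x..y} > 0) \<and>
     (\<forall>x y. 0 \<le> x \<longrightarrow> x \<le> y \<longrightarrow> y \<le> 1 \<longrightarrow> v {x..y} \<le> K * \<bar>y - x\<bar>) \<and>
     (\<forall>A B. A \<in> sets borel \<longrightarrow> B \<in> sets borel \<longrightarrow> A \<subseteq> {0..1} \<longrightarrow>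
            B \<subseteq> A \<longrightarrow> v B \<le> v A)"

type_synonym cut = "nat \<times> nat \<times> nat"

definition is_cut :: "nat \<Rightarrow> cut \<Rightarrow> bool" where
  "is_cut N x \<longleftrightarrow> (case x of (a, b, c) \<Rightarrow> a + b + c = N)"

definition piece :: "nat \<Rightarrow> cut \<Rightarrow> nat \<Rightarrow> real set" where
  "piece N x j = (case x of (a, b, c) \<Rightarrow>
     if j = 0 then {0 .. real a / real N}
     else if j = 1 then {real a / real N .. real (a + b) / real N}
     else {real (a + b) / real N .. 1})"

definition best_piece :: "(nat \<Rightarrow> real set \<Rightarrow> real) \<Rightarrow> nat \<Rightarrow> nat \<Rightarrow> cut \<Rightarrow> nat \<Rightarrow> bool" where
  "best_piece u N i x j \<longleftrightarrow> j < 3 \<and>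
     (\<forall>k<3. k \<noteq> j \<longrightarrow> u i (piece N x k) < u i (piece N x j))"

definition nondegenerate :: "(nat \<Rightarrow> real set \<Rightarrow> real) \<Rightarrow> nat \<Rightarrow> bool" where
  "nondegenerate u N \<longleftrightarrow> (\<forall>i<3. \<forall>x. is_cut N x \<longrightarrow> (\<exists>j. best_piece u N i x j))"

definition choice :: "(nat \<Rightarrow> real set \<Rightarrow> real) \<Rightarrow> nat \<Rightarrow> nat \<Rightarrow> cut \<Rightarrow> nat" where
  "choice u N i x = (THE j. best_piece u N i x j)"

definition adjacent :: "cut \<Rightarrow> cut \<Rightarrow> bool" where
  "adjacent x y \<longleftrightarrow> (case x of (x0, x1, x2) \<Rightarrow> case y of (y0, y1, y2) \<Rightarrow>
      \<bar>int x1 - int y1\<bar> \<le> 1 \<and> \<bar>int x2 - int y2\<bar> \<le> 1)"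

definition envy_free_solution ::
  "(nat \<Rightarrow> cut \<Rightarrow> nat) \<Rightarrow> nat \<Rightarrow> cut \<Rightarrow> cut \<Rightarrow> cut \<Rightarrow> (nat \<Rightarrow> nat) \<Rightarrow> bool" where
  "envy_free_solution P N y0 y1 y2 \<pi> \<longleftrightarrow>
     is_cut N y0 \<and> is_cut N y1 \<and> is_cut N y2 \<and>
     adjacent y0 y1 \<and> adjacent y0 y2 \<and> adjacent y1 y2 \<and>
     \<pi> permutes {0..<3} \<and>
     (\<forall>i<3. \<exists>y\<in>{y0, y1, y2}. P i y = \<pi> i)"

text \<open>Query algorithms as decision trees: a query asks for P_i(x) and continues
  depending on the answer; a leaf outputs three cuts and a permutation.\<close>
datatype qtree =
    Output cut cut cut "nat \<Rightarrow> nat"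
  | Query nat cut "nat \<Rightarrow> qtree"

primrec run :: "(nat \<Rightarrow> cut \<Rightarrow> nat) \<Rightarrow> qtree \<Rightarrow> cut \<times> cut \<times> cut \<times> (nat \<Rightarrow> nat)" where
  "run P (Output a b c p) = (a, b, c, p)"
| "run P (Query i x f) = run P (f (P i x))"

primrec num_queries :: "(nat \<Rightarrow> cut \<Rightarrow> nat) \<Rightarrow> qtree \<Rightarrow> nat" where
  "num_queries P (Output a b c p) = 0"
| "num_queries P (Query i x f) = Suc (num_queries P (f (P i x)))"

end

theory Submission
  imports Defs "HOL-Library.Log_Nat"
begin

text \<open>
  A cut with the knives at \<open>a/N \<le> b/N\<close> is a vertex \<open>(a, b)\<close> of the triangle
  \<open>0 \<le> a \<le> b \<le> N\<close>; it is owned by player \<open>(a + b) mod 3\<close> and labelled by the owner's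
  favourite piece. Moving the first knife to the right only grows piece 0 and shrinks piece 1,
  so along a row \<open>b\<close> each player's choices read \<open>1\<dots>1 2\<dots>2 0\<dots>0\<close>, and a whole row is
  recovered from six thresholds, each found by binary search. Call an edge with labels \<open>{0, 1}\<close>
  a door. Empty pieces are never chosen, which gives Sperner boundary conditions: row 0 has
  no doors, row \<open>N\<close> an odd number. A binary search over the rows therefore finds a row \<open>b\<close>
  with an even and row \<open>b + 1\<close> with an odd number of doors, and the zigzag of triangles
  between them contains a fully labelled one. Its three cuts are pairwise adjacent and owned
  by three different players, which is an envy-free solution. With \<open>D \<approx> log N\<close> this costs
  \<open>6 D\<^sup>2 + 12 D\<close> queries.
\<close>

lemma less_3_cases: "(j::nat) < 3 \<Longrightarrow> j = 0 \<or> j = 1 \<or> j = 2"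
  by auto

lemma all_less_3: "(\<forall>k<3. Q k) \<longleftrightarrow> Q 0 \<and> Q 1 \<and> Q (2::nat)"
  using less_3_cases by auto

lemma even_odd_cases:
  fixes k :: nat
  obtains h where "k = 2 * h" | h where "k = 2 * h + 1"
  by (metis evenE oddE)

definition cut_at :: "nat \<Rightarrow> nat \<Rightarrow> nat \<Rightarrow> cut" where
  "cut_at N a b = (a, b - a, N - b)"

lemma is_cut_cut_at: "a \<le> b \<Longrightarrow> b \<le> N \<Longrightarrow> is_cut N (cut_at N a b)"
  by (simp add: is_cut_def cut_at_def)

lemma piece_cut_at:
  assumes "a \<le> b" "j < 3" "0 < N"
  shows "piece N (cut_at N a b) j =
    {real ([0, a, b, N] ! j) / N .. real ([0, a, b, N] ! Suc j) / N}"
  using less_3_cases[OF assms(2)] assms(1,3) by (auto simp: piece_def cut_at_def)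

lemma best_piece_unique: "best_piece u N i x j \<Longrightarrow> best_piece u N i x j' \<Longrightarrow> j' = j"
  unfolding best_piece_def by (metis less_asym)

lemma best_piece_choice:
  assumes "nondegenerate u N" "i < 3" "is_cut N x"
  shows "best_piece u N i x (choice u N i x)"
proof -
  obtain j where j: "best_piece u N i x j"
    using assms unfolding nondegenerate_def by blast
  then show ?thesis
    unfolding choice_def by (rule theI) (rule best_piece_unique[OF j])
qed

lemma choice_eqI:
  "nondegenerate u N \<Longrightarrow> i < 3 \<Longrightarrow> is_cut N x \<Longrightarrow> best_piece u N i x j \<Longrightarrow> choice u N i x = j"
  using best_piece_choice best_piece_unique by metis

lemma choice_less_3: "nondegenerate u N \<Longrightarrow> i < 3 \<Longrightarrow> is_cut N x \<Longrightarrow> choice u N i x < 3"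
  using best_piece_choice unfolding best_piece_def by blast

lemma valid_utility_singleton: "valid_utility K v \<Longrightarrow> 0 \<le> p \<Longrightarrow> p \<le> 1 \<Longrightarrow> v {p..p} \<le> 0"
  unfolding valid_utility_def by (metis abs_zero diff_self mult_zero_right order_refl)

lemma valid_utility_pos: "valid_utility K v \<Longrightarrow> 0 \<le> x \<Longrightarrow> x < y \<Longrightarrow> y \<le> 1 \<Longrightarrow> 0 < v {x..y}"
  unfolding valid_utility_def by blast

lemma valid_utility_mono:
  "valid_utility K v \<Longrightarrow> 0 \<le> x \<Longrightarrow> x \<le> x' \<Longrightarrow> y' \<le> y \<Longrightarrow> y \<le> 1 \<Longrightarrow> v {x'..y'} \<le> v {x..y}"
  unfolding valid_utility_def by (auto intro: borel_closed)

section \<open>Query procedures and binary search\<close>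

text \<open>
  A procedure is a decision tree awaiting its continuation; \<open>computes P p v w\<close> says that,
  against the oracle \<open>P\<close>, it passes the value \<open>v\<close> on after at most \<open>w\<close> queries.
\<close>

definition computes :: "(nat \<Rightarrow> cut \<Rightarrow> nat) \<Rightarrow> (('a \<Rightarrow> qtree) \<Rightarrow> qtree) \<Rightarrow> 'a \<Rightarrow> nat \<Rightarrow> bool" where
  "computes P p v w \<longleftrightarrow>
     (\<forall>g. run P (p g) = run P (g v) \<and> num_queries P (p g) \<le> w + num_queries P (g v))"

lemma computes_return: "computes P (\<lambda>g. g v) v 0"
  by (simp add: computes_def)

lemma computes_query: "computes P (\<lambda>g. Query i x (\<lambda>j. g (f j))) (f (P i x)) 1"
  by (simp add: computes_def)

lemma computes_bind:
  assumes p: "computes P p v w" and q: "computes P (q v) r w'"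
  shows "computes P (\<lambda>g. p (\<lambda>x. q x g)) r (w + w')"
  unfolding computes_def
proof
  fix g
  have "run P (p (\<lambda>x. q x g)) = run P (q v g)" "run P (q v g) = run P (g r)"
    and "num_queries P (p (\<lambda>x. q x g)) \<le> w + num_queries P (q v g)"
    and "num_queries P (q v g) \<le> w' + num_queries P (g r)"
    using p q unfolding computes_def by blast+
  then show "run P (p (\<lambda>x. q x g)) = run P (g r) \<and>
      num_queries P (p (\<lambda>x. q x g)) \<le> w + w' + num_queries P (g r)"
    by simp
qed

lemma computes_map:
  assumes "computes P p v w"
  shows "computes P (\<lambda>g. p (\<lambda>x. g (f x))) (f v) w"
  unfolding computes_def
proof
  fix g
  show "run P (p (\<lambda>x. g (f x))) = run P (g (f v)) \<and>
      num_queries P (p (\<lambda>x. g (f x))) \<le> w + num_queries P (g (f v))"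
    using assms unfolding computes_def by blast
qed

primrec binsearch ::
  "(nat \<Rightarrow> (bool \<Rightarrow> qtree) \<Rightarrow> qtree) \<Rightarrow> nat \<Rightarrow> nat \<Rightarrow> nat \<Rightarrow> (nat \<Rightarrow> qtree) \<Rightarrow> qtree" where
  "binsearch probe 0 lo hi g = g lo"
| "binsearch probe (Suc d) lo hi g =
     (if hi \<le> lo then g lo
      else probe ((lo + hi) div 2) (\<lambda>r.
        (if r then binsearch probe d (Suc ((lo + hi) div 2)) hi
         else binsearch probe d lo ((lo + hi) div 2)) g))"

lemma binsearch_step:
  assumes "lo < hi" "m = (lo + hi) div 2" "computes P (probe m) v w"
    and "computes P (if v then binsearch probe d (Suc m) hi else binsearch probe d lo m) c w'"
  shows "computes P (binsearch probe (Suc d) lo hi) c (w + w')"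
proof -
  let ?next = "\<lambda>r. if r then binsearch probe d (Suc m) hi else binsearch probe d lo m"
  have "binsearch probe (Suc d) lo hi = (\<lambda>g. probe m (\<lambda>r. ?next r g))"
    unfolding assms(2) using assms(1) by (simp add: fun_eq_iff)
  then show ?thesis
    using computes_bind[where q = ?next, OF assms(3,4)] by simp
qed

definition search_boundary :: "(nat \<Rightarrow> bool) \<Rightarrow> nat \<Rightarrow> nat \<Rightarrow> nat \<Rightarrow> bool" where
  "search_boundary F lo hi c \<longleftrightarrow>
     lo \<le> c \<and> c \<le> hi \<and> (lo < c \<longrightarrow> F (c - 1)) \<and> (c < hi \<longrightarrow> \<not> F c)"

lemma search_boundary_right:
  "m < hi \<Longrightarrow> lo \<le> m \<Longrightarrow> F m \<Longrightarrow> search_boundary F (Suc m) hi c \<Longrightarrow> search_boundary F lo hi c"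
  unfolding search_boundary_def by (auto simp: le_less)

lemma search_boundary_left:
  "m < hi \<Longrightarrow> \<not> F m \<Longrightarrow> search_boundary F lo m c \<Longrightarrow> search_boundary F lo hi c"
  unfolding search_boundary_def by (auto simp: le_less)

lemma binsearch_computes:
  assumes "\<And>m. lo \<le> m \<Longrightarrow> m < hi \<Longrightarrow> computes P (probe m) (F m) w"
    and "lo \<le> hi" "hi - lo < 2 ^ d"
  shows "\<exists>c. search_boundary F lo hi c \<and> computes P (binsearch probe d lo hi) c (d * w)"
  using assms
proof (induction d arbitrary: lo hi)
  case 0
  then show ?case
    by (intro exI[of _ lo]) (simp add: search_boundary_def computes_def)
next
  case (Suc d)
  show ?case
  proof (cases "hi \<le> lo")
    case True
    then show ?thesis
      using Suc.prems by (intro exI[of _ lo]) (simp add: search_boundary_def computes_def)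
  next
    case False
    define m where "m = (lo + hi) div 2"
    have m: "lo \<le> m" "m < hi" "hi - Suc m < 2 ^ d" "m - lo < 2 ^ d"
      using False Suc.prems(3) unfolding m_def by auto
    have branch: "computes P (binsearch probe (Suc d) lo hi) c (Suc d * w)"
      if "computes P (if F m then binsearch probe d (Suc m) hi else binsearch probe d lo m)
        c (d * w)" for c
      unfolding mult_Suc using False
      by (intro binsearch_step[OF _ m_def Suc.prems(1)[OF m(1,2)] that]) simp
    show ?thesis
    proof (cases "F m")
      case True
      have "\<exists>c. search_boundary F (Suc m) hi c \<and>
          computes P (binsearch probe d (Suc m) hi) c (d * w)"
        using m by (intro Suc.IH) (auto intro: Suc.prems(1))
      then obtain c where c: "search_boundary F (Suc m) hi c"
        "computes P (binsearch probe d (Suc m) hi) c (d * w)"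
        by blast
      have "computes P (binsearch probe (Suc d) lo hi) c (Suc d * w)"
        by (rule branch) (simp add: True c(2))
      with search_boundary_right[OF m(2,1) True c(1)] show ?thesis
        by blast
    next
      case False
      have "\<exists>c. search_boundary F lo m c \<and> computes P (binsearch probe d lo m) c (d * w)"
        using m by (intro Suc.IH) (auto intro: Suc.prems(1))
      then obtain c where c: "search_boundary F lo m c"
        "computes P (binsearch probe d lo m) c (d * w)"
        by blast
      have "computes P (binsearch probe (Suc d) lo hi) c (Suc d * w)"
        by (rule branch) (simp add: False c(2))
      with search_boundary_left[OF m(2) False c(1)] show ?thesis
        by blast
    qed
  qed
qed

lemma binsearch_threshold:
  assumes "\<And>m. lo \<le> m \<Longrightarrow> m < hi \<Longrightarrow> computes P (probe m) (F m) w"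
    and antimono: "\<And>m m'. lo \<le> m \<Longrightarrow> m \<le> m' \<Longrightarrow> m' < hi \<Longrightarrow> F m' \<Longrightarrow> F m"
    and "lo \<le> hi" "hi - lo < 2 ^ d"
  shows "\<exists>c. (\<forall>m. lo \<le> m \<longrightarrow> m < hi \<longrightarrow> F m = (m < c)) \<and>
           computes P (binsearch probe d lo hi) c (d * w)"
proof -
  obtain c where "search_boundary F lo hi c"
    and search: "computes P (binsearch probe d lo hi) c (d * w)"
    using binsearch_computes[of lo hi P probe F w d, OF assms(1,3,4)] by blast
  then have c: "lo \<le> c" "c \<le> hi" "lo < c \<longrightarrow> F (c - 1)" "c < hi \<longrightarrow> \<not> F c"
    unfolding search_boundary_def by simp_all
  have "F m = (m < c)" if m: "lo \<le> m" "m < hi" for m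
  proof
    assume "m < c"
    with c(2,3) m show "F m"
      by (intro antimono[of m "c - 1"]) auto
  next
    assume "F m"
    with c(1,4) m antimono[of c m] show "m < c"
      by (meson not_less order.strict_trans2)
  qed
  with search show ?thesis
    by (intro exI[of _ c] conjI allI impI)
qed

section \<open>Doors and the zigzag through a strip\<close>

definition door :: "nat \<Rightarrow> nat \<Rightarrow> bool" where
  "door x y \<longleftrightarrow> (x = 0 \<and> y = 1) \<or> (x = 1 \<and> y = 0)"

definition odd_doors :: "nat \<Rightarrow> nat \<Rightarrow> nat \<Rightarrow> bool" where
  "odd_doors x y z \<longleftrightarrow> ((door x y \<noteq> door y z) \<noteq> door x z)"

lemma odd_doors_imp_distinct:
  assumes "x < 3" "y < 3" "z < 3" "odd_doors x y z"
  shows "distinct [x, y, z]"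
  using less_3_cases[OF assms(1)] less_3_cases[OF assms(2)] less_3_cases[OF assms(3)] assms(4)
  by (elim disjE) (simp_all add: odd_doors_def door_def)

primrec door_parity :: "(nat \<Rightarrow> nat) \<Rightarrow> nat \<Rightarrow> bool" where
  "door_parity L 0 = False"
| "door_parity L (Suc n) = (door_parity L n \<noteq> door (L n) (L (Suc n)))"

lemma door_parity_binary: "(\<And>a. a \<le> n \<Longrightarrow> L a \<le> 1) \<Longrightarrow> door_parity L n = (L 0 \<noteq> L n)"
proof (induction n)
  case (Suc n)
  have "L 0 \<le> 1" "L n \<le> 1" "L (Suc n) \<le> 1"
    using Suc.prems by simp_all
  moreover have "door_parity L n = (L 0 \<noteq> L n)"
    using Suc by simp
  ultimately show ?case
    by (auto simp: door_def)
qed simp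

definition zigzag :: "(nat \<Rightarrow> nat) \<Rightarrow> (nat \<Rightarrow> nat) \<Rightarrow> nat \<Rightarrow> nat" where
  "zigzag B T k = (if even k then T (k div 2) else B (k div 2))"

text \<open>The edges \<open>(Z k, Z (k + 2))\<close> of the zigzag are the edges of its two rows.\<close>

primrec skip_parity :: "(nat \<Rightarrow> nat) \<Rightarrow> nat \<Rightarrow> bool" where
  "skip_parity Z 0 = False"
| "skip_parity Z (Suc m) = (skip_parity Z m \<noteq> door (Z m) (Z (m + 2)))"

lemma skip_parity_zigzag:
  "skip_parity (zigzag B T) (2 * a) = (door_parity T a \<noteq> door_parity B a) \<and>
   skip_parity (zigzag B T) (2 * a + 1) = (door_parity T (Suc a) \<noteq> door_parity B a)"
proof (induction a)
  case (Suc a)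
  have "2 * Suc a = Suc (2 * a + 1)" "2 * Suc a + 1 = Suc (2 * Suc a)"
    by simp_all
  with Suc show ?case
    by (auto simp: zigzag_def)
qed (simp add: zigzag_def)

lemma rung_door_telescope:
  "(\<And>k. k < m \<Longrightarrow> \<not> odd_doors (Z k) (Z (k + 1)) (Z (k + 2))) \<Longrightarrow>
   door (Z m) (Z (m + 1)) = (door (Z 0) (Z 1) \<noteq> skip_parity Z m)"
proof (induction m)
  case (Suc m)
  then have "\<not> odd_doors (Z m) (Z (m + 1)) (Z (m + 2))"
    by simp
  with Suc show ?case
    unfolding odd_doors_def by (auto simp: add.commute)
qed simp

lemma zigzag_odd_doors:
  assumes "door_parity T (Suc b) \<noteq> door_parity B b" "\<not> door (T 0) (B 0)" "\<not> door (B b) (T (Suc b))"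
  shows "\<exists>k < 2 * b + 1. odd_doors (zigzag B T k) (zigzag B T (k + 1)) (zigzag B T (k + 2))"
proof (rule ccontr)
  assume "\<not> ?thesis"
  then have "door (zigzag B T (2 * b + 1)) (zigzag B T (2 * b + 1 + 1)) =
      (door (zigzag B T 0) (zigzag B T 1) \<noteq> skip_parity (zigzag B T) (2 * b + 1))"
    by (intro rung_door_telescope) auto
  with assms skip_parity_zigzag[of B T b] show False
    by (auto simp: zigzag_def)
qed

section \<open>Geometry of a strip\<close>

definition owner :: "nat \<Rightarrow> nat \<Rightarrow> nat" where
  "owner a b = (a + b) mod 3"

text \<open>Vertex \<open>k\<close> of the zigzag between rows \<open>b\<close> and \<open>b + 1\<close> is \<open>(k div 2, strip_row b k)\<close>.\<close>

definition strip_row :: "nat \<Rightarrow> nat \<Rightarrow> nat" where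
  "strip_row b k = (if even k then Suc b else b)"

definition strip_cut :: "nat \<Rightarrow> nat \<Rightarrow> nat \<Rightarrow> cut" where
  "strip_cut N b k = cut_at N (k div 2) (strip_row b k)"

definition strip_owner :: "nat \<Rightarrow> nat \<Rightarrow> nat" where
  "strip_owner b k = owner (k div 2) (strip_row b k)"

lemma strip_row_bounds: "k \<le> 2 * b + 2 \<Longrightarrow> k div 2 \<le> strip_row b k \<and> strip_row b k \<le> Suc b"
  by (cases k rule: even_odd_cases) (auto simp: strip_row_def)

lemma is_cut_strip_cut: "k \<le> 2 * b + 2 \<Longrightarrow> Suc b \<le> N \<Longrightarrow> is_cut N (strip_cut N b k)"
  using strip_row_bounds[of k b] unfolding strip_cut_def by (intro is_cut_cut_at) auto

lemma strip_cuts_adjacent: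
  assumes "k + 2 \<le> 2 * b + 2" "Suc b \<le> N"
  shows "adjacent (strip_cut N b k) (strip_cut N b (k + 1)) \<and>
    adjacent (strip_cut N b k) (strip_cut N b (k + 2)) \<and>
    adjacent (strip_cut N b (k + 1)) (strip_cut N b (k + 2))"
proof (cases k rule: even_odd_cases)
  case (1 h)
  then have "k + 1 = 2 * h + 1" "k + 2 = 2 * (h + 1)" "h \<le> b"
    using assms by auto
  with 1 assms show ?thesis
    by (simp add: strip_cut_def strip_row_def cut_at_def adjacent_def)
next
  case (2 h)
  then have "k + 1 = 2 * (h + 1)" "k + 2 = 2 * (h + 1) + 1" "h + 1 \<le> b"
    using assms by auto
  with 2 assms show ?thesis
    by (simp add: strip_cut_def strip_row_def cut_at_def adjacent_def)
qed

lemma strip_owners_distinct: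
  "distinct [strip_owner b k, strip_owner b (k + 1), strip_owner b (k + 2)]"
proof -
  have mod3: "distinct [s mod 3, (s + 1) mod 3, (s + 2) mod 3]" for s :: nat
    by (simp add: mod_Suc)
  show ?thesis
  proof (cases k rule: even_odd_cases)
    case (1 h)
    then have "k + 1 = 2 * h + 1" "k + 2 = 2 * (h + 1)"
      by simp_all
    with 1 mod3[of "h + b"] show ?thesis
      by (auto simp: strip_owner_def strip_row_def owner_def ac_simps)
  next
    case (2 h)
    then have "k + 1 = 2 * (h + 1)" "k + 2 = 2 * (h + 1) + 1"
      by simp_all
    with 2 mod3[of "h + b"] show ?thesis
      by (auto simp: strip_owner_def strip_row_def owner_def ac_simps)
  qed
qed

section \<open>Envy-free solutions from a fully labelled triangle\<close>

definition assign3 :: "nat \<Rightarrow> nat \<Rightarrow> nat \<Rightarrow> nat \<Rightarrow> nat \<Rightarrow> nat \<Rightarrow> nat \<Rightarrow> nat" where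
  "assign3 o0 o1 o2 l0 l1 l2 x =
     (if x = o0 then l0 else if x = o1 then l1 else if x = o2 then l2 else x)"

lemma distinct3_eq_atLeastLessThan_3:
  "distinct [x, y, z] \<Longrightarrow> {x, y, z} \<subseteq> {0..<3} \<Longrightarrow> {x, y, z} = {0..<3::nat}"
  using distinct_card[of "[x, y, z]"] by (intro card_subset_eq) auto

lemma assign3_permutes:
  assumes "distinct [o0, o1, o2]" "distinct [l0, l1, l2]" "{l0, l1, l2} = {o0, o1, o2}"
  shows "assign3 o0 o1 o2 l0 l1 l2 permutes {o0, o1, o2}"
proof (rule bij_imp_permutes)
  have "inj_on (assign3 o0 o1 o2 l0 l1 l2) {o0, o1, o2}"
    using assms(1,2) by (auto simp: inj_on_def assign3_def)
  moreover have "assign3 o0 o1 o2 l0 l1 l2 ` {o0, o1, o2} = {o0, o1, o2}"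
    using assms by (auto simp: assign3_def)
  ultimately show "bij_betw (assign3 o0 o1 o2 l0 l1 l2) {o0, o1, o2} {o0, o1, o2}"
    by (simp add: bij_betw_def)
qed (auto simp: assign3_def)

lemma envy_free_solutionI:
  assumes "is_cut N y0" "is_cut N y1" "is_cut N y2"
    and "adjacent y0 y1" "adjacent y0 y2" "adjacent y1 y2"
    and owners: "distinct [o0, o1, o2]" "{o0, o1, o2} \<subseteq> {0..<3}"
    and labels: "distinct [P o0 y0, P o1 y1, P o2 y2]" "{P o0 y0, P o1 y1, P o2 y2} \<subseteq> {0..<3}"
  shows "envy_free_solution P N y0 y1 y2 (assign3 o0 o1 o2 (P o0 y0) (P o1 y1) (P o2 y2))"
proof -
  let ?\<pi> = "assign3 o0 o1 o2 (P o0 y0) (P o1 y1) (P o2 y2)"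
  have O: "{o0, o1, o2} = {0..<3}" and L: "{P o0 y0, P o1 y1, P o2 y2} = {0..<3}"
    using owners labels by (simp_all add: distinct3_eq_atLeastLessThan_3)
  have "?\<pi> permutes {0..<3}"
    using assign3_permutes[OF owners(1) labels(1)] O L by simp
  moreover have "\<exists>y\<in>{y0, y1, y2}. P i y = ?\<pi> i" if "i < 3" for i
  proof -
    have "i \<in> {o0, o1, o2}"
      using that O by simp
    with owners(1) show ?thesis
      by (auto simp: assign3_def)
  qed
  ultimately show ?thesis
    using assms unfolding envy_free_solution_def by blast
qed

text \<open>
  Threshold \<open>n < 6\<close> of a row is where the answer of player \<open>n mod 3\<close> stops being \<open>1\<close>
  (for \<open>n < 3\<close>) or stops being nonzero (for \<open>n \<ge> 3\<close>).
\<close>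

definition threshold_test :: "nat \<Rightarrow> nat \<Rightarrow> bool" where
  "threshold_test n j \<longleftrightarrow> (if n < 3 then j = 1 else j \<noteq> 0)"

definition decode_row :: "nat \<Rightarrow> (nat \<Rightarrow> nat) \<Rightarrow> nat \<Rightarrow> nat" where
  "decode_row b th a =
     (if a \<le> b then if a < th (owner a b) then 1 else if a < th (owner a b + 3) then 2 else 0
      else 0)"

definition probe_threshold :: "nat \<Rightarrow> nat \<Rightarrow> nat \<Rightarrow> nat \<Rightarrow> (bool \<Rightarrow> qtree) \<Rightarrow> qtree" where
  "probe_threshold N b n a g = Query (n mod 3) (cut_at N a b) (\<lambda>j. g (threshold_test n j))"

primrec read_thresholds :: "nat \<Rightarrow> nat \<Rightarrow> nat \<Rightarrow> nat \<Rightarrow> ((nat \<Rightarrow> nat) \<Rightarrow> qtree) \<Rightarrow> qtree" where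
  "read_thresholds N D b 0 g = g (\<lambda>_. 0)"
| "read_thresholds N D b (Suc n) g =
     binsearch (probe_threshold N b n) D 0 (Suc b)
       (\<lambda>c. read_thresholds N D b n (\<lambda>th. g (th(n := c))))"

definition read_row :: "nat \<Rightarrow> nat \<Rightarrow> nat \<Rightarrow> ((nat \<Rightarrow> nat) \<Rightarrow> qtree) \<Rightarrow> qtree" where
  "read_row N D b g = read_thresholds N D b 6 (\<lambda>th. g (decode_row b th))"

definition probe_row_parity :: "nat \<Rightarrow> nat \<Rightarrow> nat \<Rightarrow> (bool \<Rightarrow> qtree) \<Rightarrow> qtree" where
  "probe_row_parity N D b g = read_row N D b (\<lambda>L. g (\<not> door_parity L b))"

definition strip_output :: "nat \<Rightarrow> nat \<Rightarrow> (nat \<Rightarrow> nat) \<Rightarrow> (nat \<Rightarrow> nat) \<Rightarrow> qtree" where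
  "strip_output N b B T =
     (let Z = zigzag B T; k = (LEAST k. odd_doors (Z k) (Z (k + 1)) (Z (k + 2))) in
      Output (strip_cut N b k) (strip_cut N b (k + 1)) (strip_cut N b (k + 2))
        (assign3 (strip_owner b k) (strip_owner b (k + 1)) (strip_owner b (k + 2))
           (Z k) (Z (k + 1)) (Z (k + 2))))"

definition solve_strip :: "nat \<Rightarrow> nat \<Rightarrow> nat \<Rightarrow> qtree" where
  "solve_strip N D b = read_row N D b (\<lambda>B. read_row N D (Suc b) (\<lambda>T. strip_output N b B T))"

text \<open>
  Row \<open>0\<close> has no doors, so the search runs over the rows \<open>1 \<dots> N - 1\<close>; its result \<open>c \<ge> 1\<close>
  is the top row of the strip.
\<close>

definition envy_free_search :: "nat \<Rightarrow> nat \<Rightarrow> qtree" where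
  "envy_free_search N D = binsearch (probe_row_parity N D) D 1 N (\<lambda>c. solve_strip N D (c - 1))"

locale cake_division =
  fixes u :: "nat \<Rightarrow> real set \<Rightarrow> real" and N :: nat and K :: real
  assumes valid: "\<And>i. i < 3 \<Longrightarrow> valid_utility K (u i)"
    and nondeg: "nondegenerate u N"
    and N_pos: "0 < N"
begin

abbreviation P :: "nat \<Rightarrow> cut \<Rightarrow> nat" where
  "P \<equiv> choice u N"

lemma choice_cut_at_less_3: "i < 3 \<Longrightarrow> a \<le> b \<Longrightarrow> b \<le> N \<Longrightarrow> P i (cut_at N a b) < 3"
  using choice_less_3[OF nondeg _ is_cut_cut_at] by blast

lemma choice_cut_at_avoids_empty_piece:
  assumes "i < 3" "a \<le> b" "b \<le> N" "j < 3" "[0, a, b, N] ! j = [0, a, b, N] ! Suc j"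
  shows "P i (cut_at N a b) \<noteq> j"
proof
  let ?e = "[0, a, b, N]"
  let ?v = "\<lambda>k. u i (piece N (cut_at N a b) k)"
  assume choice: "P i (cut_at N a b) = j"
  have e_le: "?e ! k \<le> ?e ! Suc k" "?e ! Suc k \<le> N" if "k < 3" for k
    using less_3_cases[OF that] assms(2,3) by auto
  have piece: "piece N (cut_at N a b) k = {real (?e ! k) / N .. real (?e ! Suc k) / N}"
    if "k < 3" for k
    using piece_cut_at[OF assms(2) that N_pos] .
  have "\<exists>k<3. ?e ! k < ?e ! Suc k"
    using assms(2,3) N_pos
    by (cases "0 < a"; cases "a < b") (auto intro: exI[of _ 0] exI[of _ 1] exI[of _ 2])
  then obtain k where k: "k < 3" "?e ! k < ?e ! Suc k"
    by blast
  have "?v j \<le> 0"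
    unfolding piece[OF assms(4)] assms(5)
    using e_le(2)[OF assms(4)] N_pos
    by (intro valid_utility_singleton[OF valid[OF assms(1)]]) simp_all
  moreover have "0 < ?v k"
    unfolding piece[OF k(1)]
    using e_le(2)[OF k(1)] k(2) N_pos
    by (intro valid_utility_pos[OF valid[OF assms(1)]]) (simp_all add: divide_strict_right_mono)
  moreover have "best_piece u N i (cut_at N a b) j"
    using best_piece_choice[OF nondeg assms(1) is_cut_cut_at[OF assms(2,3)]] choice by simp
  then have "?v k < ?v j"
    using k assms(5) unfolding best_piece_def by auto
  ultimately show False
    by linarith
qed

lemma utility_cut_at_shift:
  assumes "i < 3" "a \<le> a'" "a' \<le> b" "b \<le> N"
  shows "u i (piece N (cut_at N a b) 0) \<le> u i (piece N (cut_at N a' b) 0)"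
    "u i (piece N (cut_at N a' b) 1) \<le> u i (piece N (cut_at N a b) 1)"
    "u i (piece N (cut_at N a' b) 2) = u i (piece N (cut_at N a b) 2)"
proof -
  have pieces: "piece N (cut_at N x b) 0 = {0 .. real x / N}"
    "piece N (cut_at N x b) 1 = {real x / N .. real b / N}"
    "piece N (cut_at N x b) 2 = {real b / N .. 1}" if "x \<le> b" for x
    using that by (simp_all add: piece_def cut_at_def)
  have frac: "0 \<le> real a / N" "real a / N \<le> real a' / N" "real a' / N \<le> real b / N" "real b / N \<le> 1"
    using assms N_pos by (simp_all add: divide_right_mono)
  have "a \<le> b"
    using assms by simp
  note mono = valid_utility_mono[OF valid[OF assms(1)]]
  show "u i (piece N (cut_at N a b) 0) \<le> u i (piece N (cut_at N a' b) 0)"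
    unfolding pieces[OF assms(3)] pieces[OF \<open>a \<le> b\<close>]
    by (rule mono) (use frac in linarith)+
  show "u i (piece N (cut_at N a' b) 1) \<le> u i (piece N (cut_at N a b) 1)"
    unfolding pieces[OF assms(3)] pieces[OF \<open>a \<le> b\<close>]
    by (rule mono) (use frac in linarith)+
  show "u i (piece N (cut_at N a' b) 2) = u i (piece N (cut_at N a b) 2)"
    unfolding pieces[OF assms(3)] pieces[OF \<open>a \<le> b\<close>] ..
qed

lemma choice_cut_at_antimono:
  assumes "i < 3" "a \<le> a'" "a' \<le> b" "b \<le> N"
  shows "P i (cut_at N a' b) = 1 \<Longrightarrow> P i (cut_at N a b) = 1"
    and "P i (cut_at N a' b) \<noteq> 0 \<Longrightarrow> P i (cut_at N a b) \<noteq> 0"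
proof -
  let ?x = "cut_at N a b" and ?x' = "cut_at N a' b"
  have cuts: "is_cut N ?x" "is_cut N ?x'"
    using assms by (simp_all add: is_cut_cut_at)
  note best = best_piece_choice[OF nondeg assms(1), unfolded best_piece_def all_less_3]
  note shift = utility_cut_at_shift[OF assms]
  show "P i ?x = 1" if "P i ?x' = 1"
  proof (rule choice_eqI[OF nondeg assms(1) cuts(1)])
    have "u i (piece N ?x' 0) < u i (piece N ?x' 1)" "u i (piece N ?x' 2) < u i (piece N ?x' 1)"
      using best[OF cuts(2), unfolded that] by simp_all
    with shift show "best_piece u N i ?x 1"
      unfolding best_piece_def all_less_3 by simp
  qed
  show "P i ?x \<noteq> 0" if "P i ?x' \<noteq> 0"
  proof
    assume "P i ?x = 0"
    then have below: "u i (piece N ?x 1) < u i (piece N ?x 0)"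
      "u i (piece N ?x 2) < u i (piece N ?x 0)"
      using best[OF cuts(1)] by simp_all
    have above: "u i (piece N ?x' 0) < u i (piece N ?x' (P i ?x'))"
      using best[OF cuts(2)] that by metis
    have "P i ?x' = 1 \<or> P i ?x' = 2"
      using that less_3_cases[OF choice_less_3[OF nondeg assms(1) cuts(2)]] by auto
    then show False
    proof
      assume "P i ?x' = 1"
      with above below shift show False
        by simp
    next
      assume "P i ?x' = 2"
      with above below shift show False
        by simp
    qed
  qed
qed

definition row_labels :: "nat \<Rightarrow> nat \<Rightarrow> nat" where
  "row_labels b a = (if a \<le> b then P (owner a b) (cut_at N a b) else 0)"

lemma row_labels_less_3: "b \<le> N \<Longrightarrow> row_labels b a < 3"
  by (simp add: row_labels_def owner_def choice_cut_at_less_3)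

lemma row_labels_first_ne_0: "b \<le> N \<Longrightarrow> row_labels b 0 \<noteq> 0"
  by (simp add: row_labels_def owner_def choice_cut_at_avoids_empty_piece)

lemma row_labels_last_ne_1: "b \<le> N \<Longrightarrow> row_labels b b \<noteq> 1"
  by (simp add: row_labels_def owner_def choice_cut_at_avoids_empty_piece)

lemma door_parity_top_row: "door_parity (row_labels N) N"
proof -
  have "row_labels N a \<le> 1" if "a \<le> N" for a
  proof -
    have "P (owner a N) (cut_at N a N) \<noteq> 2"
      using that by (intro choice_cut_at_avoids_empty_piece) (simp_all add: owner_def)
    with row_labels_less_3[of N a] that show ?thesis
      by (simp add: row_labels_def)
  qed
  moreover have "row_labels N 0 = 1" "row_labels N N = 0"
    using row_labels_first_ne_0[of N] row_labels_last_ne_1[of N] calculation[of 0] calculation[of N]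
    by auto
  ultimately show ?thesis
    by (simp add: door_parity_binary)
qed

definition row_thresholds :: "nat \<Rightarrow> nat \<Rightarrow> (nat \<Rightarrow> nat) \<Rightarrow> bool" where
  "row_thresholds b n th \<longleftrightarrow>
     (\<forall>m<n. \<forall>a\<le>b. a < th m \<longleftrightarrow> threshold_test m (P (m mod 3) (cut_at N a b)))"

lemma decode_row_eq:
  assumes "row_thresholds b 6 th" "b \<le> N"
  shows "decode_row b th = row_labels b"
proof
  fix a
  show "decode_row b th a = row_labels b a"
  proof (cases "a \<le> b")
    case True
    let ?i = "owner a b"
    have th: "a < th m \<longleftrightarrow> threshold_test m (P (m mod 3) (cut_at N a b))" if "m < 6" for m
      using assms(1) True that unfolding row_thresholds_def by blast
    have i: "?i < 3" "?i mod 3 = ?i" "(?i + 3) mod 3 = ?i"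
      by (simp_all add: owner_def)
    then have "a < th ?i \<longleftrightarrow> P ?i (cut_at N a b) = 1"
      "a < th (?i + 3) \<longleftrightarrow> P ?i (cut_at N a b) \<noteq> 0"
      using th[of ?i] th[of "?i + 3"] by (simp_all add: threshold_test_def)
    with True less_3_cases[OF choice_cut_at_less_3[OF i(1) True assms(2)]] show ?thesis
      by (auto simp: decode_row_def row_labels_def)
  qed (simp add: decode_row_def row_labels_def)
qed

lemma read_thresholds_computes:
  assumes "b \<le> N" "Suc b < 2 ^ D"
  shows "\<exists>th. row_thresholds b n th \<and> computes P (read_thresholds N D b n) th (n * D)"
proof (induction n)
  case 0
  have "read_thresholds N D b 0 = (\<lambda>g. g (\<lambda>_. 0))"
    by (simp add: fun_eq_iff)
  with computes_return[of P "\<lambda>_. 0"] show ?case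
    by (auto simp: row_thresholds_def)
next
  case (Suc n)
  let ?F = "\<lambda>a. threshold_test n (P (n mod 3) (cut_at N a b))"
  have probe: "computes P (probe_threshold N b n a) (?F a) 1" for a
    unfolding probe_threshold_def by (rule computes_query)
  have antimono: "?F a" if "a \<le> a'" "a' < Suc b" "?F a'" for a a'
    using that choice_cut_at_antimono[of "n mod 3" a a' b] assms(1)
    by (auto simp: threshold_test_def split: if_splits)
  obtain c where c: "\<forall>a. a \<le> b \<longrightarrow> ?F a = (a < c)"
    and search: "computes P (binsearch (probe_threshold N b n) D 0 (Suc b)) c (D * 1)"
    using binsearch_threshold[of 0 "Suc b" P "probe_threshold N b n" ?F 1 D] probe antimono assms(2)
    by (auto simp: less_Suc_eq_le)
  obtain th where th: "row_thresholds b n th"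
    and rest: "computes P (read_thresholds N D b n) th (n * D)"
    using Suc.IH by blast
  have "read_thresholds N D b (Suc n) =
      (\<lambda>g. binsearch (probe_threshold N b n) D 0 (Suc b)
        (\<lambda>c. read_thresholds N D b n (\<lambda>th. g (th(n := c)))))"
    by (rule ext) simp
  then have "computes P (read_thresholds N D b (Suc n)) (th(n := c)) (Suc n * D)"
    using computes_bind[where q = "\<lambda>c g. read_thresholds N D b n (\<lambda>th. g (th(n := c)))",
        OF search computes_map[OF rest]]
    by simp
  moreover have "row_thresholds b (Suc n) (th(n := c))"
    using th c unfolding row_thresholds_def by (auto simp: less_Suc_eq)
  ultimately show ?case
    by blast
qed

lemma read_row_computes:
  assumes "b \<le> N" "Suc N < 2 ^ D"
  shows "computes P (read_row N D b) (row_labels b) (6 * D)"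
proof -
  have "Suc b < 2 ^ D"
    using assms by simp
  then obtain th where th: "row_thresholds b 6 th" "computes P (read_thresholds N D b 6) th (6 * D)"
    using read_thresholds_computes[OF assms(1)] by blast
  then show ?thesis
    using computes_map[OF th(2), of "decode_row b"] decode_row_eq[OF th(1) assms(1)]
    unfolding read_row_def[abs_def] by simp
qed

lemma zigzag_row_labels:
  "k \<le> 2 * b + 2 \<Longrightarrow>
   zigzag (row_labels b) (row_labels (Suc b)) k = P (strip_owner b k) (strip_cut N b k)"
  using strip_row_bounds[of k b]
  by (auto simp: zigzag_def row_labels_def strip_owner_def strip_cut_def strip_row_def)

lemma strip_output_envy_free:
  assumes "Suc b \<le> N" "\<not> door_parity (row_labels b) b" "door_parity (row_labels (Suc b)) (Suc b)"
  shows "case run P (strip_output N b (row_labels b) (row_labels (Suc b))) of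
           (y0, y1, y2, \<pi>) \<Rightarrow> envy_free_solution P N y0 y1 y2 \<pi>"
proof -
  define Z where "Z = zigzag (row_labels b) (row_labels (Suc b))"
  have Z: "Z j = P (strip_owner b j) (strip_cut N b j)" if "j \<le> 2 * b + 2" for j
    using zigzag_row_labels[OF that] by (simp add: Z_def)
  obtain k' where k': "k' < 2 * b + 1" "odd_doors (Z k') (Z (k' + 1)) (Z (k' + 2))"
    using zigzag_odd_doors[of "row_labels (Suc b)" b "row_labels b"] assms
      row_labels_first_ne_0[of b] row_labels_first_ne_0[of "Suc b"]
      row_labels_last_ne_1[of b] row_labels_last_ne_1[of "Suc b"]
    by (auto simp: Z_def door_def)
  define k where "k = (LEAST k. odd_doors (Z k) (Z (k + 1)) (Z (k + 2)))"
  have odd: "odd_doors (Z k) (Z (k + 1)) (Z (k + 2))" and "k \<le> k'"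
    unfolding k_def using k'(2) by (rule LeastI, rule Least_le)
  then have k: "k + 2 \<le> 2 * b + 2"
    using k'(1) by simp
  have Zk: "Z k = P (strip_owner b k) (strip_cut N b k)"
    "Z (k + 1) = P (strip_owner b (k + 1)) (strip_cut N b (k + 1))"
    "Z (k + 2) = P (strip_owner b (k + 2)) (strip_cut N b (k + 2))"
    using Z k by simp_all
  have less_3: "Z j < 3" for j
    using row_labels_less_3 assms(1) by (simp add: Z_def zigzag_def)
  have labels: "distinct [Z k, Z (k + 1), Z (k + 2)]" "{Z k, Z (k + 1), Z (k + 2)} \<subseteq> {0..<3}"
    using odd_doors_imp_distinct[OF less_3 less_3 less_3 odd] less_3 by simp_all
  have owners: "{strip_owner b k, strip_owner b (k + 1), strip_owner b (k + 2)} \<subseteq> {0..<3}"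
    by (simp add: strip_owner_def owner_def)
  have cuts: "is_cut N (strip_cut N b j)" if "j \<le> k + 2" for j
    using is_cut_strip_cut[OF _ assms(1)] that k by simp
  have "envy_free_solution P N (strip_cut N b k) (strip_cut N b (k + 1)) (strip_cut N b (k + 2))
     (assign3 (strip_owner b k) (strip_owner b (k + 1)) (strip_owner b (k + 2))
        (Z k) (Z (k + 1)) (Z (k + 2)))"
    unfolding Zk using strip_cuts_adjacent[OF k assms(1)] labels[unfolded Zk]
    by (intro envy_free_solutionI strip_owners_distinct owners cuts) auto
  then show ?thesis
    unfolding strip_output_def Let_def Z_def[symmetric] k_def[symmetric] by simp
qed

lemma solve_strip_correct:
  assumes "Suc N < 2 ^ D" "Suc b \<le> N"
    and "\<not> door_parity (row_labels b) b" "door_parity (row_labels (Suc b)) (Suc b)"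
  shows "(case run P (solve_strip N D b) of (y0, y1, y2, \<pi>) \<Rightarrow> envy_free_solution P N y0 y1 y2 \<pi>) \<and>
    num_queries P (solve_strip N D b) \<le> 12 * D"
proof -
  let ?final = "strip_output N b (row_labels b) (row_labels (Suc b))"
  let ?top = "\<lambda>B. read_row N D (Suc b) (strip_output N b B)"
  have "run P (solve_strip N D b) = run P (?top (row_labels b))"
    "num_queries P (solve_strip N D b) \<le> 6 * D + num_queries P (?top (row_labels b))"
    using read_row_computes[OF Suc_leD[OF assms(2)] assms(1)]
    unfolding computes_def solve_strip_def by blast+
  moreover have "run P (?top (row_labels b)) = run P ?final"
    "num_queries P (?top (row_labels b)) \<le> 6 * D + num_queries P ?final"
    using read_row_computes[OF assms(2,1)] unfolding computes_def by blast+
  moreover have "num_queries P ?final = 0"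
    by (simp add: strip_output_def Let_def)
  ultimately show ?thesis
    using strip_output_envy_free[OF assms(2-4)] by simp
qed

lemma envy_free_search_finds_strip:
  assumes "Suc N < 2 ^ D"
  obtains b where "Suc b \<le> N"
    and "\<not> door_parity (row_labels b) b" "door_parity (row_labels (Suc b)) (Suc b)"
    and "run P (envy_free_search N D) = run P (solve_strip N D b)"
    and "num_queries P (envy_free_search N D) \<le> D * (6 * D) + num_queries P (solve_strip N D b)"
proof -
  have probe: "computes P (probe_row_parity N D m) (\<not> door_parity (row_labels m) m) (6 * D)"
    if "m < N" for m
    using computes_map[OF read_row_computes[OF _ assms], of m "\<lambda>L. \<not> door_parity L m"] that
    unfolding probe_row_parity_def[abs_def] by simp
  have "\<exists>c. search_boundary (\<lambda>m. \<not> door_parity (row_labels m) m) 1 N c \<and>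
      computes P (binsearch (probe_row_parity N D) D 1 N) c (D * (6 * D))"
    by (rule binsearch_computes) (use probe N_pos assms in auto)
  then obtain c where "search_boundary (\<lambda>m. \<not> door_parity (row_labels m) m) 1 N c"
    and search: "computes P (binsearch (probe_row_parity N D) D 1 N) c (D * (6 * D))"
    by blast
  then have c: "1 \<le> c" "c \<le> N" "1 < c \<longrightarrow> \<not> door_parity (row_labels (c - 1)) (c - 1)"
      "c < N \<longrightarrow> door_parity (row_labels c) c"
    unfolding search_boundary_def by simp_all
  define b where "b = c - 1"
  have b: "Suc b = c"
    using c(1) by (simp add: b_def)
  show ?thesis
  proof
    show "Suc b \<le> N"
      using b c(2) by simp
    show "\<not> door_parity (row_labels b) b"
      using c(1,3) unfolding b_def by (cases "c = 1") auto
    show "door_parity (row_labels (Suc b)) (Suc b)"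
      using c(2,4) door_parity_top_row unfolding b by (cases "c = N") auto
    show "run P (envy_free_search N D) = run P (solve_strip N D b)"
      "num_queries P (envy_free_search N D) \<le> D * (6 * D) + num_queries P (solve_strip N D b)"
      using search[unfolded computes_def, rule_format, of "\<lambda>c. solve_strip N D (c - 1)"]
      unfolding envy_free_search_def b_def by simp_all
  qed
qed

lemma envy_free_search_correct:
  assumes "Suc N < 2 ^ D"
  shows "(case run P (envy_free_search N D) of
           (y0, y1, y2, \<pi>) \<Rightarrow> envy_free_solution P N y0 y1 y2 \<pi>) \<and>
    num_queries P (envy_free_search N D) \<le> 6 * D * D + 12 * D"
proof -
  obtain b where b: "Suc b \<le> N"
      "\<not> door_parity (row_labels b) b" "door_parity (row_labels (Suc b)) (Suc b)"
    and run: "run P (envy_free_search N D) = run P (solve_strip N D b)"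
    and queries: "num_queries P (envy_free_search N D) \<le>
      D * (6 * D) + num_queries P (solve_strip N D b)"
    using envy_free_search_finds_strip[OF assms] .
  note strip = solve_strip_correct[OF assms b]
  have "D * (6 * D) = 6 * D * D"
    by simp
  with queries strip have "num_queries P (envy_free_search N D) \<le> 6 * D * D + 12 * D"
    by linarith
  then show ?thesis
    unfolding run using conjunct1[OF strip] by (intro conjI)
qed

end

lemma ln_2_ge_half: "1 / 2 \<le> ln (2::real)"
  using ln_le_minus_one[of "1 / 2"] by (simp add: ln_div)

lemma search_depth_bound:
  fixes r :: real
  assumes "0 < r" and N_def: "N = nat \<lceil>r\<rceil>" and D_def: "D = floorlog 2 N + 1"
  shows "0 < N" "Suc N < 2 ^ D" "real D \<le> 3 + 2 * \<bar>ln r\<bar>"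
proof -
  show N: "0 < N"
    unfolding N_def using assms(1) by simp
  then show "Suc N < 2 ^ D"
    using floorlog_bounds[of N 2] unfolding D_def by (simp add: Suc_le_eq order_le_less_trans)
  have "real D = nat \<lfloor>log 2 (real N)\<rfloor> + 2"
    using N by (simp add: D_def floorlog_def)
  also have "\<dots> \<le> log 2 (real N) + 2"
    using N by simp
  finally have D: "real D \<le> log 2 (real N) + 2" .
  show "real D \<le> 3 + 2 * \<bar>ln r\<bar>"
  proof (cases "r \<le> 1")
    case True
    have "\<lceil>r\<rceil> = 1"
      using assms(1) True by (intro ceiling_unique) simp_all
    then have "N = 1"
      unfolding N_def by simp
    then show ?thesis
      using D by simp
  next
    case False
    have "real N \<le> 2 * r"
      unfolding N_def using False by linarith
    then have "log 2 (real N) \<le> log 2 (2 * r)"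
      using N by simp
    also have "\<dots> = 1 + ln r / ln 2"
      using assms(1) by (simp add: log_mult log_def[of 2 r])
    also have "ln r / ln 2 \<le> 2 * ln r"
      using ln_2_ge_half False by (simp add: divide_le_eq mult_left_mono)
    finally show ?thesis
      using D False by simp
  qed
qed

lemma query_count_quadratic:
  assumes "real d \<le> 3 + 2 * x" "0 \<le> x"
  shows "real (6 * d * d + 12 * d) \<le> 150 * x\<^sup>2 + 150"
proof -
  have "real d * real d \<le> (3 + 2 * x) * (3 + 2 * x)"
    using assms by (intro mult_mono) auto
  then have "real d * real d \<le> 9 + 12 * x + 4 * x\<^sup>2"
    by (simp add: power2_eq_square algebra_simps)
  moreover have "0 \<le> x\<^sup>2 - 2 * x + 1"
    using zero_le_power2[of "x - 1"] by (simp add: power2_eq_square algebra_simps)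
  moreover have "real (6 * d * d + 12 * d) = 6 * (real d * real d) + 12 * real d"
    by simp
  ultimately show ?thesis
    using assms zero_le_power2[of x] by linarith
qed

lemma envy_free_search_solves:
  assumes "0 < r" "N = nat \<lceil>r\<rceil>" "D = floorlog 2 N + 1"
    and "\<forall>i<3. valid_utility K (u i)" "nondegenerate u N"
  shows "(case run (choice u N) (envy_free_search N D) of (y0, y1, y2, \<pi>) \<Rightarrow>
           envy_free_solution (choice u N) N y0 y1 y2 \<pi>) \<and>
         real (num_queries (choice u N) (envy_free_search N D)) \<le> 150 * (ln r)\<^sup>2 + 150"
proof -
  note depth = search_depth_bound[OF assms(1-3)]
  interpret cake_division u N K
    using assms(4,5) depth(1) by unfold_locales auto
  note correct = envy_free_search_correct[OF depth(2)]
  have "real (num_queries P (envy_free_search N D)) \<le> real (6 * D * D + 12 * D)"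
    using correct by linarith
  also have "\<dots> \<le> 150 * (ln r)\<^sup>2 + 150"
    using query_count_quadratic[OF depth(3)] by simp
  finally show ?thesis
    using conjunct1[OF correct] by (intro conjI)
qed

theorem theorem5:
  "\<exists>C::real. C > 0 \<and>
     (\<forall>K \<epsilon> :: real. K > 0 \<longrightarrow> \<epsilon> > 0 \<longrightarrow>
        (let N = nat \<lceil>K / \<epsilon>\<rceil> in
         \<exists>T :: qtree. \<forall>u :: nat \<Rightarrow> real set \<Rightarrow> real.
            (\<forall>i<3. valid_utility K (u i)) \<longrightarrow> nondegenerate u N \<longrightarrow>
            (case run (choice u N) T of (y0, y1, y2, \<pi>) \<Rightarrow>
                envy_free_solution (choice u N) N y0 y1 y2 \<pi>) \<and>
            real (num_queries (choice u N) T) \<le> C * (ln (K / \<epsilon>))\<^sup>2 + C))"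
proof (intro exI[of _ 150] conjI allI impI, goal_cases)
  case (2 K \<epsilon>)
  then have "0 < K / \<epsilon>"
    by simp
  let ?N = "nat \<lceil>K / \<epsilon>\<rceil>"
  show ?case
    unfolding Let_def
    by (intro exI[of _ "envy_free_search ?N (floorlog 2 ?N + 1)"] allI impI)
      (rule envy_free_search_solves[OF \<open>0 < K / \<epsilon>\<close> refl refl])
qed simp

end
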